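(* Let $S_2^{in}>S_2^m$, $S_1^{in}>\lambda_1^1(D,r)$, and $0<D\le\min\bigl(rm_1,(1-r)\mu_2(S_2^m)\bigr)$ (so that $\phi_j(D)$ is defined). Then $\phi_1(D)>0$. In addition, if $D>D_2^*:=(1-r)\mu_2(S_2^{in})$, then $\phi_2(D)>0$.
   Context: Let $k_1,k_2>0$, $r\in(0,1)$, $r_1=r$, $r_2=1-r$, $D_i=D/r_i$. $\mu_1\in C^1(\mathbb R_+)$ with $\mu_1(0)=0$, $\mu_1(+\infty)=m_1$, $\mu_1'>0$ on $(0,\infty)$; $\mu_2\in C^1(\mathbb R_+)$ with $\mu_2(0)=0$, $\mu_2(+\infty)=0$, and there is $S_2^m>0$ with $\mu_2'>0$ on $(0,S_2^m)$, $\mu_2'<0$ on $(S_2^m,\infty)$. $\lambda_1^1(D,r)$ is the unique solution of $\mu_1(S)=D_1$; $\lambda_2^{21}(D,r)\le\lambda_2^{22}(D,r)$ are the solutions of $\mu_2(S)=D_2$ (for $D\le r_2\mu_2(S_2^m)$). Let $X_1^{1*}=(S_1^{in}-\lambda_1^1)/k_1$ and let $X_1^{2*}=X_1^{2*}(D,r,S_1^{in})$ be the unique solution in $(X_1^{1*},S_1^{in}/k_1)$ of $\mu_1(S_1^{in}-k_1x)=D_2(x-X_1^{1*})/x$. Define $\phi_j(D)=S_2^{in}+k_2X_1^{2*}-\lambda_2^{2j}(D,r)$, $j=1,2$. *)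

theory Defs
  imports "HOL-Analysis.Analysis"
begin

end

theory Submission
  imports Defs
begin

text \<open>Write \<open>D\<^sub>2 = D/(1-r)\<close>. Since \<open>\<mu>\<^sub>2\<close> rises continuously from \<open>\<mu>\<^sub>2(0) = 0\<close> to
  \<open>\<mu>\<^sub>2(S2m) \<ge> D\<^sub>2\<close>, the level \<open>D\<^sub>2\<close> is attained in \<open>[0, S2m]\<close>, so the smaller root
  \<open>lam21\<close> satisfies \<open>lam21 \<le> S2m < S2in\<close>; as \<open>X12 > X\<^sub>1\<^sup>1\<^sup>* > 0\<close>, this gives \<open>\<phi>\<^sub>1(D) > 0\<close>.
  If \<open>D > (1-r) \<mu>\<^sub>2(S2in)\<close>, then \<open>\<mu>\<^sub>2(S2in) < D\<^sub>2 = \<mu>\<^sub>2(lam22)\<close>; since \<open>\<mu>\<^sub>2\<close> is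
  nonincreasing on \<open>[S2m, \<infinity>)\<close> and \<open>S2in > S2m\<close>, this forces \<open>lam22 < S2in\<close>, whence
  \<open>\<phi>\<^sub>2(D) > 0\<close>.\<close>

lemma has_real_derivative_at_of_within_atLeast:
  assumes "(f has_real_derivative f') (at x within {c..})" and "c < x"
  shows "(f has_real_derivative f') (at x)"
proof -
  have "at x within {c..} = at x"
    by (rule at_within_interior) (use \<open>c < x\<close> in simp)
  with assms(1) show ?thesis
    by simp
qed

lemma nonincreasing_beyond_of_deriv_neg:
  fixes f f' :: "real \<Rightarrow> real"
  assumes deriv: "\<forall>x\<ge>c. (f has_real_derivative f' x) (at x within {c..})"
    and neg: "\<forall>x>m. f' x < 0"
    and "c \<le> m" "m \<le> a" "a \<le> b"
  shows "f b \<le> f a"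
proof -
  have "continuous_on {c..} f"
    using deriv by (intro DERIV_continuous_on) auto
  then have "continuous_on {a..b} f"
    by (rule continuous_on_subset) (use assms(3,4) in auto)
  moreover have "\<exists>y. (f has_real_derivative y) (at x) \<and> y \<le> 0" if "a < x" for x
  proof -
    have "c < x" "m < x"
      using that assms(3,4) by auto
    then show ?thesis
      using deriv neg has_real_derivative_at_of_within_atLeast by (meson less_imp_le)
  qed
  ultimately show ?thesis
    using DERIV_nonpos_imp_decreasing_open[OF \<open>a \<le> b\<close>] by blast
qed

lemma smaller_level_point_le:
  fixes f :: "real \<Rightarrow> real"
  assumes "continuous_on {0..m} f"
    and "0 \<le> m" "f 0 \<le> y" "y \<le> f m"
    and level: "\<forall>S\<ge>0. f S = y \<longrightarrow> S = l1 \<or> S = l2" and "l1 \<le> l2"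
  shows "l1 \<le> m"
proof -
  obtain s where "0 \<le> s" "s \<le> m" "f s = y"
    using IVT'[of f 0 y m] assms by auto
  with level \<open>l1 \<le> l2\<close> show ?thesis
    by force
qed

theorem lemmaA4:
  fixes k1 k2 r D m1 S2m S1in S2in :: real
    and mu1 mu1' mu2 mu2' :: "real \<Rightarrow> real"
    and lam11 lam21 lam22 X12 :: real
  assumes k1: "k1 > 0" and k2: "k2 > 0"
    and r: "0 < r" "r < 1"
    \<comment> \<open>\<mu>1 in C^1(R_+), \<mu>1(0)=0, \<mu>1(+\<infinity>)=m1, \<mu>1' > 0 on (0,\<infinity>)\<close>
    and mu1_deriv: "\<forall>x\<ge>0. (mu1 has_real_derivative mu1' x) (at x within {0..})"
    and mu1_C1: "continuous_on {0..} mu1'"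
    and mu1_0: "mu1 0 = 0"
    and mu1_lim: "(mu1 \<longlongrightarrow> m1) at_top"
    and mu1_pos: "\<forall>x>0. mu1' x > 0"
    \<comment> \<open>\<mu>2 in C^1(R_+), \<mu>2(0)=0, \<mu>2(+\<infinity>)=0, unimodal with maximum at S2m\<close>
    and mu2_deriv: "\<forall>x\<ge>0. (mu2 has_real_derivative mu2' x) (at x within {0..})"
    and mu2_C1: "continuous_on {0..} mu2'"
    and mu2_0: "mu2 0 = 0"
    and mu2_lim: "(mu2 \<longlongrightarrow> 0) at_top"
    and S2m: "S2m > 0"
    and mu2_inc: "\<forall>x. 0 < x \<and> x < S2m \<longrightarrow> mu2' x > 0"
    and mu2_dec: "\<forall>x. x > S2m \<longrightarrow> mu2' x < 0"
    \<comment> \<open>hypotheses of the lemma\<close>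
    and D: "0 < D" "D \<le> min (r * m1) ((1 - r) * mu2 S2m)"
    and S2in: "S2in > S2m"
    \<comment> \<open>\<lambda>_1^1(D,r): the unique solution of \<mu>1(S) = D/r\<close>
    and lam11: "lam11 \<ge> 0" "mu1 lam11 = D / r"
    and lam11_unique: "\<forall>S\<ge>0. mu1 S = D / r \<longrightarrow> S = lam11"
    and S1in: "S1in > lam11"
    \<comment> \<open>\<lambda>_2^{21} \<le> \<lambda>_2^{22}: the solutions of \<mu>2(S) = D/(1-r)\<close>
    and lam2: "0 \<le> lam21" "lam21 \<le> lam22"
      "mu2 lam21 = D / (1 - r)" "mu2 lam22 = D / (1 - r)"
    and lam2_all: "\<forall>S\<ge>0. mu2 S = D / (1 - r) \<longrightarrow> S = lam21 \<or> S = lam22"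
    \<comment> \<open>X_1^{2*}: the unique solution in (X_1^{1*}, S1in/k1), where X_1^{1*} = (S1in - \<lambda>_1^1)/k1\<close>
    and X12: "(S1in - lam11) / k1 < X12" "X12 < S1in / k1"
      "mu1 (S1in - k1 * X12) = (D / (1 - r)) * (X12 - (S1in - lam11) / k1) / X12"
    and X12_unique: "\<forall>x. (S1in - lam11) / k1 < x \<and> x < S1in / k1 \<and>
        mu1 (S1in - k1 * x) = (D / (1 - r)) * (x - (S1in - lam11) / k1) / x \<longrightarrow> x = X12"
  shows "S2in + k2 * X12 - lam21 > 0
    \<and> (D > (1 - r) * mu2 S2in \<longrightarrow> S2in + k2 * X12 - lam22 > 0)"
proof -
  have X12_pos: "X12 > 0"
    using X12(1) S1in k1 by (smt (verit) divide_pos_pos)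
  have level: "0 < D / (1 - r)" "D / (1 - r) \<le> mu2 S2m"
    using D r by (simp_all add: pos_divide_le_eq mult.commute)
  have "continuous_on {0..} mu2"
    using mu2_deriv by (intro DERIV_continuous_on) auto
  then have "continuous_on {0..S2m} mu2"
    by (rule continuous_on_subset) auto
  then have "lam21 \<le> S2m"
    using smaller_level_point_le[of S2m mu2 "D / (1 - r)" lam21 lam22] S2m mu2_0 level lam2_all lam2(2)
    by simp
  then have phi1: "S2in + k2 * X12 - lam21 > 0"
    using S2in k2 X12_pos by (smt (verit) mult_pos_pos)
  have "S2in + k2 * X12 - lam22 > 0" if "D > (1 - r) * mu2 S2in"
  proof (rule ccontr)
    assume "\<not> ?thesis"
    then have "S2in \<le> lam22"
      using k2 X12_pos by (smt (verit) mult_pos_pos)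
    then have "mu2 lam22 \<le> mu2 S2in"
      using nonincreasing_beyond_of_deriv_neg[OF mu2_deriv mu2_dec] S2m S2in by simp
    moreover have "mu2 S2in < D / (1 - r)"
      using that r by (simp add: pos_less_divide_eq mult.commute)
    ultimately show False
      using lam2(4) by simp
  qed
  with phi1 show ?thesis
    by blast
qed

end
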